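(* Let $\mathcal H$ be a real Hilbert space. Let $\Psi: \mathcal H \to \mathbb R \cup \{+\infty\}$ be proper, lower-semicontinuous and convex, and let $\Phi: \mathcal H \to \mathbb R$ be convex and continuously differentiable with $L$-Lipschitz continuous gradient; set $\Theta=\Psi+\Phi$ and suppose $\operatorname{argmin}\Theta\neq\emptyset$. Let $\alpha>3$ and $0<s<\frac1L$, and let $(x_k)$ be generated by: given arbitrary $x_0,x_1\in\mathcal H$, for $k\ge1$, $$y_k = x_k + \frac{k-1}{k+\alpha-1}(x_k-x_{k-1}),\qquad x_{k+1} = \operatorname{prox}_{s\Psi}\big(y_k - s\nabla\Phi(y_k)\big).$$ Let $x^*\in\operatorname{argmin}\Theta$, and for $k\ge1$ define $z_k = x_k + \frac{k-1}{\alpha-1}(x_k-x_{k-1})$ and $$\mathcal E(k) = \frac{2s}{\alpha-1}(k+\alpha-2)^2\big(\Theta(x_k)-\Theta(x^* )\big) + (\alpha-1)\|z_k-x^*\|^2.$$ Then $$\sum_{k=1}^\infty k\big(\Theta(x_k)-\Theta(x^* )\big) \le \frac{(\alpha-1)\mathcal E(1)}{2s(\alpha-3)}.$$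
   Context: $\operatorname{prox}_{s\Psi}(z) = \operatorname{argmin}_{u\in\mathcal H}\{\Psi(u) + \frac{1}{2s}\|u-z\|^2\}$ denotes the proximal operator. *)

theory Defs
  imports "HOL-Analysis.Analysis"
begin

text \<open>Extended-real-valued functions \<open>\<Psi> : H \<Rightarrow> \<real> \<union> {+\<infinity>}\<close> are modelled as
  \<open>'a \<Rightarrow> ereal\<close> never taking the value \<open>-\<infinity>\<close>.\<close>

definition proper_fun :: "('a \<Rightarrow> ereal) \<Rightarrow> bool" where
  "proper_fun f \<longleftrightarrow> (\<forall>x. f x \<noteq> -\<infinity>) \<and> (\<exists>x. f x \<noteq> \<infinity>)"

definition lsc_fun :: "('a::topological_space \<Rightarrow> ereal) \<Rightarrow> bool" where
  "lsc_fun f \<longleftrightarrow> (\<forall>c::real. closed {x. f x \<le> ereal c})"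

definition convex_ereal_fun :: "('a::real_vector \<Rightarrow> ereal) \<Rightarrow> bool" where
  "convex_ereal_fun f \<longleftrightarrow>
     (\<forall>x y t. 0 \<le> t \<and> t \<le> 1 \<longrightarrow>
        f ((1 - t) *\<^sub>R x + t *\<^sub>R y) \<le> ereal (1 - t) * f x + ereal t * f y)"

definition argmin_set :: "('a \<Rightarrow> ereal) \<Rightarrow> 'a set" where
  "argmin_set f = {u. \<forall>v. f u \<le> f v}"

text \<open>The proximal operator, as the set of minimizers of
  \<open>u \<mapsto> \<Psi> u + 1/(2s) \<parallel>u - z\<parallel>\<^sup>2\<close> (a singleton for proper lsc convex \<open>\<Psi>\<close>, \<open>s > 0\<close>).\<close>
definition prox_set :: "real \<Rightarrow> ('a::real_normed_vector \<Rightarrow> ereal) \<Rightarrow> 'a \<Rightarrow> 'a set" where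
  "prox_set s \<Psi> z = argmin_set (\<lambda>u. \<Psi> u + ereal (1 / (2 * s) * (norm (u - z))\<^sup>2))"

end

theory Submission
  imports Defs
begin

text \<open>The energy \<open>\<E>\<close> is a Lyapunov function of the scheme. Writing \<open>c\<^sub>k = (k + \<alpha> - 1)/(\<alpha> - 1)\<close>,
  the extrapolated point \<open>y\<^sub>k\<close> lies on the segment from \<open>x\<^sub>k\<close> to \<open>z\<^sub>k\<close> at parameter \<open>1/c\<^sub>k\<close>
  and \<open>z\<^sub>k\<^sub>+\<^sub>1 = z\<^sub>k + c\<^sub>k (x\<^sub>k\<^sub>+\<^sub>1 - y\<^sub>k)\<close>. Averaging the forward-backward descent inequality
  (prox inequality plus the descent lemma for \<open>\<Phi>\<close>) tested at \<open>x\<^sub>k\<close> and at \<open>x\<^sub>*\<close> with weights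
  \<open>1 - 1/c\<^sub>k\<close> and \<open>1/c\<^sub>k\<close> yields
  \<open>\<E>(k+1) + 2s(\<alpha> - 3)/(\<alpha> - 1) \<cdot> k (\<Theta>(x\<^sub>k) - \<Theta>(x\<^sub>*)) \<le> \<E>(k)\<close>,
  the slack \<open>(\<alpha> - 3) k\<close> coming from \<open>(k + \<alpha> - 1) k \<le> (k + \<alpha> - 2)\<^sup>2 - (\<alpha> - 3) k\<close>.
  Telescoping and \<open>\<E> \<ge> 0\<close> bound the partial sums.\<close>

lemma has_real_derivative_along_line:
  fixes \<Phi> :: "'a::real_inner \<Rightarrow> real"
  assumes "\<And>u. (\<Phi> has_derivative (\<lambda>h. g u \<bullet> h)) (at u)"
  shows "((\<lambda>t. \<Phi> (y + t *\<^sub>R d)) has_real_derivative (g (y + t *\<^sub>R d) \<bullet> d)) (at t)"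
proof -
  have line: "((\<lambda>t. y + t *\<^sub>R d) has_derivative (\<lambda>h. h *\<^sub>R d)) (at t)"
    by (auto intro!: derivative_eq_intros)
  have "((\<Phi> \<circ> (\<lambda>t. y + t *\<^sub>R d)) has_derivative ((\<lambda>h. g (y + t *\<^sub>R d) \<bullet> h) \<circ> (\<lambda>h. h *\<^sub>R d))) (at t)"
    by (rule diff_chain_at[OF line assms])
  then show ?thesis
    unfolding has_field_derivative_def by (simp add: o_def mult_commute_abs)
qed

lemma convex_on_gradient_inequality:
  fixes \<Phi> :: "'a::real_inner \<Rightarrow> real"
  assumes convex: "convex_on UNIV \<Phi>" and grad: "\<And>u. (\<Phi> has_derivative (\<lambda>h. g u \<bullet> h)) (at u)"
  shows "\<Phi> y + g y \<bullet> (u - y) \<le> \<Phi> u"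
proof -
  let ?f = "\<lambda>t. \<Phi> (y + t *\<^sub>R (u - y))"
  have "convex_on UNIV ?f"
  proof (rule convex_onI)
    fix t a b :: real assume t: "0 < t" "t < 1"
    have "y + ((1 - t) * a + t * b) *\<^sub>R (u - y)
        = (1 - t) *\<^sub>R (y + a *\<^sub>R (u - y)) + t *\<^sub>R (y + b *\<^sub>R (u - y))"
      by (simp add: algebra_simps)
    then show "?f ((1 - t) *\<^sub>R a + t *\<^sub>R b) \<le> (1 - t) * ?f a + t * ?f b"
      using convex_onD[OF convex, of t "y + a *\<^sub>R (u - y)" "y + b *\<^sub>R (u - y)"] t by simp
  qed auto
  then have "?f 1 - ?f 0 \<ge> (g (y + 0 *\<^sub>R (u - y)) \<bullet> (u - y)) * (1 - 0)"
    by (rule convex_on_imp_above_tangent)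
      (use has_real_derivative_along_line[OF grad, of y "u - y" 0]
        in \<open>auto intro: has_field_derivative_at_within\<close>)
  then show ?thesis by simp
qed

lemma lipschitz_gradient_upper_bound:
  fixes \<Phi> :: "'a::real_inner \<Rightarrow> real"
  assumes grad: "\<And>u. (\<Phi> has_derivative (\<lambda>h. g u \<bullet> h)) (at u)"
    and lipschitz: "\<And>u v. norm (g u - g v) \<le> L * norm (u - v)"
  shows "\<Phi> q \<le> \<Phi> y + g y \<bullet> (q - y) + L / 2 * (norm (q - y))\<^sup>2"
proof -
  define d where "d = q - y"
  define h where "h = (\<lambda>t. \<Phi> (y + t *\<^sub>R d) - (t * (g y \<bullet> d) + L / 2 * t\<^sup>2 * (norm d)\<^sup>2))"
  have "h 1 \<le> h 0"
  proof (rule DERIV_nonpos_imp_nonincreasing[of 0 1 h])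
    fix t :: real assume t: "0 \<le> t" "t \<le> 1"
    have quadratic: "((\<lambda>t. t * (g y \<bullet> d) + L / 2 * t\<^sup>2 * (norm d)\<^sup>2)
        has_real_derivative (g y \<bullet> d + L * t * (norm d)\<^sup>2)) (at t)"
      by (auto intro!: derivative_eq_intros simp: power2_eq_square)
    have deriv: "(h has_real_derivative (g (y + t *\<^sub>R d) \<bullet> d - (g y \<bullet> d + L * t * (norm d)\<^sup>2))) (at t)"
      unfolding h_def by (rule DERIV_diff[OF has_real_derivative_along_line[OF grad] quadratic])
    have "g (y + t *\<^sub>R d) \<bullet> d - g y \<bullet> d = (g (y + t *\<^sub>R d) - g y) \<bullet> d"
      by (simp add: inner_diff_left)
    also have "\<dots> \<le> norm (g (y + t *\<^sub>R d) - g y) * norm d"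
      by (rule norm_cauchy_schwarz)
    also have "\<dots> \<le> L * norm (t *\<^sub>R d) * norm d"
      using lipschitz[of "y + t *\<^sub>R d" y] by (simp add: mult_right_mono)
    also have "\<dots> = L * t * (norm d)\<^sup>2"
      using t by (simp add: power2_eq_square)
    finally have "g (y + t *\<^sub>R d) \<bullet> d - (g y \<bullet> d + L * t * (norm d)\<^sup>2) \<le> 0"
      by simp
    with deriv show "\<exists>D. (h has_real_derivative D) (at t) \<and> D \<le> 0"
      by blast
  qed simp
  then show ?thesis unfolding h_def d_def by simp
qed

lemma power2_norm_add_scaleR:
  fixes x v :: "'a::real_inner"
  shows "(norm (x + t *\<^sub>R v))\<^sup>2 = (norm x)\<^sup>2 + 2 * t * (x \<bullet> v) + t\<^sup>2 * (norm v)\<^sup>2"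
  unfolding power2_norm_eq_inner
  by (simp add: inner_add_left inner_add_right inner_commute[of v x] algebra_simps power2_eq_square)

lemma le_of_le_add_mult_small:
  fixes a b K :: real
  assumes "0 \<le> K" and le: "\<And>t. 0 < t \<Longrightarrow> t \<le> 1 \<Longrightarrow> a \<le> b + t * K"
  shows "a \<le> b"
proof (rule field_le_epsilon)
  fix e :: real assume "0 < e"
  define t where "t = min 1 (e / (K + 1))"
  have t: "0 < t" "t \<le> 1"
    using \<open>0 < e\<close> \<open>0 \<le> K\<close> by (auto simp: t_def)
  have "t * (K + 1) \<le> e"
    using \<open>0 \<le> K\<close> by (simp add: t_def min_le_iff_disj pos_le_divide_eq[symmetric])
  then have "t * K \<le> e"
    using t by (simp add: distrib_left)
  then show "a \<le> b + e" using le[OF t(1,2)] by linarith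
qed

lemma prox_set_finite:
  fixes \<Psi> :: "'a::real_inner \<Rightarrow> ereal"
  assumes proper: "proper_fun \<Psi>" and p: "p \<in> prox_set s \<Psi> w"
  shows "\<bar>\<Psi> p\<bar> \<noteq> \<infinity>"
proof -
  obtain q where q: "\<Psi> q \<noteq> \<infinity>" using proper unfolding proper_fun_def by auto
  have "\<Psi> p + ereal (1 / (2 * s) * (norm (p - w))\<^sup>2) \<le> \<Psi> q + ereal (1 / (2 * s) * (norm (q - w))\<^sup>2)"
    using p unfolding prox_set_def argmin_set_def by auto
  moreover have "\<Psi> q + ereal (1 / (2 * s) * (norm (q - w))\<^sup>2) < \<infinity>" using q by auto
  ultimately have "\<Psi> p \<noteq> \<infinity>" by auto
  moreover have "\<Psi> p \<noteq> -\<infinity>" using proper unfolding proper_fun_def by auto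
  ultimately show ?thesis by auto
qed

text \<open>Compare \<open>p\<close> with the points \<open>p + t (u - p)\<close>, \<open>0 < t \<le> 1\<close>, and let \<open>t \<rightarrow> 0\<close>.\<close>

lemma prox_set_variational_inequality:
  fixes \<Psi> :: "'a::real_inner \<Rightarrow> ereal"
  assumes proper: "proper_fun \<Psi>" and convex: "convex_ereal_fun \<Psi>" and "0 < s"
    and p: "p \<in> prox_set s \<Psi> w" and u: "\<Psi> u \<noteq> \<infinity>"
  shows "real_of_ereal (\<Psi> p) \<le> real_of_ereal (\<Psi> u) + (1 / s) * ((p - w) \<bullet> (u - p))"
proof -
  define a where "a = real_of_ereal (\<Psi> p)"
  define b where "b = real_of_ereal (\<Psi> u)"
  have \<Psi>_p: "\<Psi> p = ereal a" using prox_set_finite[OF proper p] unfolding a_def by (cases "\<Psi> p") auto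
  have \<Psi>_u: "\<Psi> u = ereal b" using u proper unfolding b_def proper_fun_def by (cases "\<Psi> u") auto
  let ?K = "1 / (2 * s) * (norm (u - p))\<^sup>2"
  show ?thesis unfolding a_def[symmetric] b_def[symmetric]
  proof (rule le_of_le_add_mult_small[of ?K])
    show "?K \<ge> 0" using \<open>0 < s\<close> by simp
    fix t :: real assume t: "0 < t" "t \<le> 1"
    define v where "v = (1 - t) *\<^sub>R p + t *\<^sub>R u"
    have "\<Psi> v \<le> ereal (1 - t) * \<Psi> p + ereal t * \<Psi> u"
      using convex t unfolding convex_ereal_fun_def v_def by auto
    then have \<Psi>_v: "\<Psi> v \<le> ereal ((1 - t) * a + t * b)" by (simp add: \<Psi>_p \<Psi>_u)
    have "\<Psi> p + ereal (1 / (2 * s) * (norm (p - w))\<^sup>2) \<le> \<Psi> v + ereal (1 / (2 * s) * (norm (v - w))\<^sup>2)"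
      using p unfolding prox_set_def argmin_set_def by auto
    also have "\<dots> \<le> ereal ((1 - t) * a + t * b) + ereal (1 / (2 * s) * (norm (v - w))\<^sup>2)"
      using \<Psi>_v by (rule add_right_mono)
    finally have min: "a + 1 / (2 * s) * (norm (p - w))\<^sup>2
        \<le> (1 - t) * a + t * b + 1 / (2 * s) * (norm (v - w))\<^sup>2"
      by (simp add: \<Psi>_p)
    have "v - w = (p - w) + t *\<^sub>R (u - p)" by (simp add: v_def algebra_simps)
    then have "(norm (v - w))\<^sup>2 = (norm (p - w))\<^sup>2 + 2 * t * ((p - w) \<bullet> (u - p)) + t\<^sup>2 * (norm (u - p))\<^sup>2"
      by (simp only: power2_norm_add_scaleR)
    with min have "t * a \<le> t * b + 1 / (2 * s) * (2 * t * ((p - w) \<bullet> (u - p)) + t\<^sup>2 * (norm (u - p))\<^sup>2)"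
      by (simp add: algebra_simps)
    also have "\<dots> = t * (b + (1 / s) * ((p - w) \<bullet> (u - p)) + t * ?K)"
      using \<open>0 < s\<close> by (simp add: field_simps power2_eq_square)
    finally show "a \<le> b + (1 / s) * ((p - w) \<bullet> (u - p)) + t * ?K"
      using t by simp
  qed
qed

lemma forward_backward_step_inequality:
  fixes \<Psi> :: "'a::real_inner \<Rightarrow> ereal" and \<Phi> :: "'a \<Rightarrow> real"
  assumes proper: "proper_fun \<Psi>" and convex_\<Psi>: "convex_ereal_fun \<Psi>"
    and convex_\<Phi>: "convex_on UNIV \<Phi>" and grad: "\<And>u. (\<Phi> has_derivative (\<lambda>h. g u \<bullet> h)) (at u)"
    and lipschitz: "\<And>u v. norm (g u - g v) \<le> L * norm (u - v)"
    and "0 < s" and "s * L \<le> 1"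
    and p: "p \<in> prox_set s \<Psi> (y - s *\<^sub>R g y)" and u: "\<Psi> u \<noteq> \<infinity>"
  shows "real_of_ereal (\<Psi> p) + \<Phi> p \<le> real_of_ereal (\<Psi> u) + \<Phi> u
           + (1 / s) * ((y - p) \<bullet> (y - u)) - 1 / (2 * s) * (norm (p - y))\<^sup>2"
proof -
  define N where "N = (norm (p - y))\<^sup>2"
  have "(p - (y - s *\<^sub>R g y)) \<bullet> (u - p) = (p - y) \<bullet> ((u - y) - (p - y)) + s * (g y \<bullet> (u - p))"
    by (simp add: inner_diff_left inner_add_left)
  also have "\<dots> = (y - p) \<bullet> (y - u) - N + s * (g y \<bullet> (u - p))"
    unfolding N_def power2_norm_eq_inner
    by (simp add: inner_diff_left inner_diff_right inner_commute)
  finally have "real_of_ereal (\<Psi> p)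
      \<le> real_of_ereal (\<Psi> u) + (1 / s) * ((y - p) \<bullet> (y - u) - N + s * (g y \<bullet> (u - p)))"
    using prox_set_variational_inequality[OF proper convex_\<Psi> \<open>0 < s\<close> p u] by simp
  moreover have "(1 / s) * ((y - p) \<bullet> (y - u) - N + s * (g y \<bullet> (u - p)))
      = (1 / s) * ((y - p) \<bullet> (y - u)) - N / s + g y \<bullet> (u - p)"
    using \<open>0 < s\<close> by (simp add: field_simps)
  ultimately have prox: "real_of_ereal (\<Psi> p)
      \<le> real_of_ereal (\<Psi> u) + (1 / s) * ((y - p) \<bullet> (y - u)) - N / s + g y \<bullet> (u - p)"
    by simp
  have upper: "\<Phi> p \<le> \<Phi> y + g y \<bullet> (p - y) + L / 2 * N"
    unfolding N_def by (rule lipschitz_gradient_upper_bound[OF grad lipschitz])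
  have lower: "\<Phi> y + g y \<bullet> (u - y) \<le> \<Phi> u"
    by (rule convex_on_gradient_inequality[OF convex_\<Phi> grad])
  have "g y \<bullet> (u - p) + g y \<bullet> (p - y) = g y \<bullet> (u - y)"
    by (simp add: inner_diff_right)
  moreover have "L / 2 * N \<le> N / (2 * s)"
  proof -
    have "N * (s * L) \<le> N" using \<open>s * L \<le> 1\<close> by (simp add: N_def mult_left_le)
    then show ?thesis using \<open>0 < s\<close> by (simp add: field_simps)
  qed
  ultimately have "real_of_ereal (\<Psi> p) + \<Phi> p
      \<le> real_of_ereal (\<Psi> u) + \<Phi> u + (1 / s) * ((y - p) \<bullet> (y - u)) - N / s + N / (2 * s)"
    using prox upper lower by linarith
  also have "\<dots> = real_of_ereal (\<Psi> u) + \<Phi> u + (1 / s) * ((y - p) \<bullet> (y - u)) - 1 / (2 * s) * N"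
    using \<open>0 < s\<close> by (simp add: field_simps)
  finally show ?thesis unfolding N_def .
qed

lemma inertial_lyapunov_step:
  fixes x x' y z z' xs :: "'a::real_inner" and c s T T' :: real
  assumes "1 \<le> c" and "0 < s"
    and y: "y = x + (1 / c) *\<^sub>R (z - x)"
    and z': "z' = z + c *\<^sub>R (x' - y)"
    and step_x: "T' \<le> T + (1 / s) * ((y - x') \<bullet> (y - x)) - 1 / (2 * s) * (norm (x' - y))\<^sup>2"
    and step_xs: "T' \<le> (1 / s) * ((y - x') \<bullet> (y - xs)) - 1 / (2 * s) * (norm (x' - y))\<^sup>2"
  shows "2 * s * c\<^sup>2 * T' + (norm (z' - xs))\<^sup>2 \<le> 2 * s * c * (c - 1) * T + (norm (z - xs))\<^sup>2"
proof -
  define D where "D = y - x'"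
  define N where "N = (norm (x' - y))\<^sup>2"
  define Q where "Q = D \<bullet> (z - xs)"
  have weights: "0 \<le> 1 - 1 / c" "0 \<le> 1 / c" using \<open>1 \<le> c\<close> by auto
  have "(1 - 1 / c) * T' + (1 / c) * T'
      \<le> (1 - 1 / c) * (T + (1 / s) * (D \<bullet> (y - x)) - N / (2 * s))
        + (1 / c) * ((1 / s) * (D \<bullet> (y - xs)) - N / (2 * s))"
    using step_x step_xs weights unfolding D_def N_def
    by (intro add_mono mult_left_mono) auto
  also have "\<dots> = (1 - 1 / c) * T + ((1 - 1 / c) * (D \<bullet> (y - x)) + (1 / c) * (D \<bullet> (y - xs))) / s
      - N / (2 * s)"
    using \<open>0 < s\<close> \<open>1 \<le> c\<close> by (simp add: field_simps)
  also have "(1 - 1 / c) * (D \<bullet> (y - x)) + (1 / c) * (D \<bullet> (y - xs)) = D \<bullet> ((1 / c) *\<^sub>R (z - xs))"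
  proof -
    have "(1 - 1 / c) *\<^sub>R (y - x) + (1 / c) *\<^sub>R (y - xs) = (1 / c) *\<^sub>R (z - xs)"
      using \<open>1 \<le> c\<close> unfolding y by (simp add: algebra_simps)
    then show ?thesis by (metis inner_add_right inner_scaleR_right)
  qed
  also have "D \<bullet> ((1 / c) *\<^sub>R (z - xs)) / s = Q / (s * c)"
    by (simp add: Q_def)
  finally have combined: "T' \<le> (1 - 1 / c) * T + Q / (s * c) - N / (2 * s)"
    by (simp add: algebra_simps)
  have "z' - xs = (z - xs) + (- c) *\<^sub>R D"
    unfolding z' D_def by (simp add: algebra_simps)
  then have "(norm (z' - xs))\<^sup>2 = (norm (z - xs))\<^sup>2 - 2 * c * Q + c\<^sup>2 * N"
    unfolding Q_def N_def D_def
    by (simp only: power2_norm_add_scaleR) (simp add: norm_minus_commute inner_commute)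
  moreover have "2 * s * c\<^sup>2 * T' \<le> 2 * s * c\<^sup>2 * ((1 - 1 / c) * T + Q / (s * c) - N / (2 * s))"
    using combined \<open>0 < s\<close> by (simp add: mult_left_mono)
  moreover have "2 * s * c\<^sup>2 * ((1 - 1 / c) * T + Q / (s * c) - N / (2 * s))
      = 2 * s * c * (c - 1) * T + 2 * c * Q - c\<^sup>2 * N"
    using \<open>0 < s\<close> \<open>1 \<le> c\<close> by (simp add: field_simps power2_eq_square)
  ultimately show ?thesis by linarith
qed

lemma suminf_ereal_le_of_energy_decrease:
  fixes a E :: "nat \<Rightarrow> real" and C :: real
  assumes "0 < C" and a_nonneg: "\<And>k. 0 \<le> a k" and E_nonneg: "\<And>k. 0 \<le> E k"
    and decrease: "\<And>k. E (Suc k) + C * a k \<le> E k"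
  shows "(\<Sum>k. ereal (a k)) \<le> ereal (E 0 / C)"
proof (rule suminf_bound)
  show "\<forall>n. (\<Sum>k<n. ereal (a k)) \<le> ereal (E 0 / C)"
  proof
    fix n
    have "C * (\<Sum>k<n. a k) \<le> E 0 - E n"
    proof (induction n)
      case (Suc n)
      then show ?case using decrease[of n] by (simp add: distrib_left)
    qed simp
    then have "(\<Sum>k<n. a k) \<le> E 0 / C"
      using E_nonneg[of n] \<open>0 < C\<close> by (simp add: field_simps mult.commute)
    then show "(\<Sum>k<n. ereal (a k)) \<le> ereal (E 0 / C)"
      by (simp add: sum_ereal)
  qed
qed (simp add: a_nonneg)

locale inertial_forward_backward =
  fixes \<Psi> :: "'a::real_inner \<Rightarrow> ereal" and \<Phi> :: "'a \<Rightarrow> real" and g :: "'a \<Rightarrow> 'a"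
    and L s \<alpha> :: real and x y :: "nat \<Rightarrow> 'a" and xstar :: 'a
  assumes proper: "proper_fun \<Psi>" and convex_\<Psi>: "convex_ereal_fun \<Psi>"
    and convex_\<Phi>: "convex_on UNIV \<Phi>"
    and grad: "\<And>u. (\<Phi> has_derivative (\<lambda>h. g u \<bullet> h)) (at u)"
    and lipschitz: "\<And>u v. norm (g u - g v) \<le> L * norm (u - v)"
    and \<alpha>_gt: "\<alpha> > 3" and s_pos: "0 < s" and s_L: "s * L \<le> 1"
    and y_def: "\<And>k. k \<ge> 1 \<Longrightarrow>
       y k = x k + ((real k - 1) / (real k + \<alpha> - 1)) *\<^sub>R (x k - x (k - 1))"
    and x_step: "\<And>k. k \<ge> 1 \<Longrightarrow> x (k + 1) \<in> prox_set s \<Psi> (y k - s *\<^sub>R g (y k))"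
    and xstar_min: "xstar \<in> argmin_set (\<lambda>u. \<Psi> u + ereal (\<Phi> u))"
begin

definition z :: "nat \<Rightarrow> 'a" where
  "z k = x k + ((real k - 1) / (\<alpha> - 1)) *\<^sub>R (x k - x (k - 1))"

text \<open>\<open>gap k\<close> is the real value of \<open>\<Theta>(x\<^sub>k) - \<Theta>(x\<^sub>*)\<close> only where \<open>\<Psi> (x k)\<close> is finite
  (\<open>real_of_ereal \<infinity> = 0\<close>); this holds for all \<open>k \<ge> 2\<close>, as prox points lie in the domain of \<open>\<Psi>\<close>.\<close>

definition gap :: "nat \<Rightarrow> real" where
  "gap k = real_of_ereal (\<Psi> (x k)) + \<Phi> (x k) - (real_of_ereal (\<Psi> xstar) + \<Phi> xstar)"

definition energy :: "nat \<Rightarrow> real" where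
  "energy k = 2 * s / (\<alpha> - 1) * (real k + \<alpha> - 2)\<^sup>2 * gap k + (\<alpha> - 1) * (norm (z k - xstar))\<^sup>2"

lemma not_minus_infinity: "\<Psi> u \<noteq> -\<infinity>"
  using proper unfolding proper_fun_def by auto

lemma xstar_finite: "\<Psi> xstar \<noteq> \<infinity>"
proof
  assume "\<Psi> xstar = \<infinity>"
  obtain q where "\<Psi> q \<noteq> \<infinity>" using proper unfolding proper_fun_def by auto
  then have "\<Psi> q + ereal (\<Phi> q) < \<Psi> xstar + ereal (\<Phi> xstar)"
    using \<open>\<Psi> xstar = \<infinity>\<close> not_minus_infinity[of q] by (cases "\<Psi> q") auto
  with xstar_min show False unfolding argmin_set_def by (auto simp: not_le[symmetric])
qed

lemma iterate_finite:
  assumes "\<Psi> (x 1) \<noteq> \<infinity>" and "k \<ge> 1"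
  shows "\<Psi> (x k) \<noteq> \<infinity>"
proof (cases "k = 1")
  case False
  then have "x k = x ((k - 1) + 1)" "k - 1 \<ge> 1" using \<open>k \<ge> 1\<close> by auto
  then show ?thesis using prox_set_finite[OF proper x_step[of "k - 1"]] by auto
qed (use assms in simp)

lemma objective_gap_eq:
  assumes "\<Psi> (x k) \<noteq> \<infinity>"
  shows "(\<Psi> (x k) + ereal (\<Phi> (x k))) - (\<Psi> xstar + ereal (\<Phi> xstar)) = ereal (gap k)"
  using assms xstar_finite not_minus_infinity[of "x k"] not_minus_infinity[of xstar]
  by (cases "\<Psi> (x k)"; cases "\<Psi> xstar") (auto simp: gap_def)

lemma gap_nonneg:
  assumes "\<Psi> (x k) \<noteq> \<infinity>"
  shows "0 \<le> gap k"
proof -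
  obtain p r where p: "\<Psi> (x k) = ereal p" and r: "\<Psi> xstar = ereal r"
    using assms xstar_finite not_minus_infinity[of "x k"] not_minus_infinity[of xstar]
    by (cases "\<Psi> (x k)"; cases "\<Psi> xstar") auto
  have "\<Psi> xstar + ereal (\<Phi> xstar) \<le> \<Psi> (x k) + ereal (\<Phi> (x k))"
    using xstar_min unfolding argmin_set_def by auto
  then show ?thesis by (simp add: gap_def p r)
qed

lemma energy_ereal_eq:
  assumes "\<Psi> (x k) \<noteq> \<infinity>"
  shows "ereal (2 * s / (\<alpha> - 1) * (real k + \<alpha> - 2)\<^sup>2)
      * ((\<Psi> (x k) + ereal (\<Phi> (x k))) - (\<Psi> xstar + ereal (\<Phi> xstar)))
      + ereal ((\<alpha> - 1) * (norm (z k - xstar))\<^sup>2) = ereal (energy k)"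
  by (simp add: objective_gap_eq[OF assms] energy_def)

lemma energy_nonneg:
  assumes "\<Psi> (x k) \<noteq> \<infinity>"
  shows "0 \<le> energy k"
  using gap_nonneg[OF assms] \<alpha>_gt s_pos by (simp add: energy_def)

lemma iterate_lyapunov_step:
  assumes k: "k \<ge> 1" and finite: "\<Psi> (x k) \<noteq> \<infinity>"
  defines "c \<equiv> (real k + \<alpha> - 1) / (\<alpha> - 1)"
  shows "2 * s * c\<^sup>2 * gap (k + 1) + (norm (z (k + 1) - xstar))\<^sup>2
      \<le> 2 * s * c * (c - 1) * gap k + (norm (z k - xstar))\<^sup>2"
proof -
  have "1 \<le> c" and c_minus_1: "c - 1 = real k / (\<alpha> - 1)"
    using \<alpha>_gt by (auto simp: c_def field_simps)
  have step_x: "gap (k + 1) \<le> gap k + (1 / s) * ((y k - x (k + 1)) \<bullet> (y k - x k))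
      - 1 / (2 * s) * (norm (x (k + 1) - y k))\<^sup>2"
    using forward_backward_step_inequality[OF proper convex_\<Psi> convex_\<Phi> grad lipschitz s_pos s_L
        x_step[OF k] finite]
    by (simp add: gap_def)
  have step_xs: "gap (k + 1) \<le> (1 / s) * ((y k - x (k + 1)) \<bullet> (y k - xstar))
      - 1 / (2 * s) * (norm (x (k + 1) - y k))\<^sup>2"
    using forward_backward_step_inequality[OF proper convex_\<Psi> convex_\<Phi> grad lipschitz s_pos s_L
        x_step[OF k] xstar_finite]
    by (simp add: gap_def)
  have "(1 / c) *\<^sub>R (z k - x k) = ((1 / c) * ((real k - 1) / (\<alpha> - 1))) *\<^sub>R (x k - x (k - 1))"
    by (simp add: z_def)
  also have "\<dots> = ((real k - 1) / (real k + \<alpha> - 1)) *\<^sub>R (x k - x (k - 1))"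
    using \<alpha>_gt k by (simp add: c_def)
  finally have y_k: "y k = x k + (1 / c) *\<^sub>R (z k - x k)"
    using y_def[OF k] by simp
  have "z (k + 1) = x (k + 1) + (c - 1) *\<^sub>R (x (k + 1) - x k)"
    unfolding z_def c_minus_1 by simp
  also have "\<dots> = z k + c *\<^sub>R (x (k + 1) - y k)"
    using \<open>1 \<le> c\<close> unfolding y_k by (simp add: algebra_simps)
  finally show ?thesis
    by (rule inertial_lyapunov_step[OF \<open>1 \<le> c\<close> s_pos y_k _ step_x step_xs])
qed

lemma energy_decrease:
  assumes k: "k \<ge> 1" and finite: "\<Psi> (x k) \<noteq> \<infinity>"
  shows "energy (k + 1) + 2 * s * (\<alpha> - 3) / (\<alpha> - 1) * (real k * gap k) \<le> energy k"
proof -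
  define c where "c = (real k + \<alpha> - 1) / (\<alpha> - 1)"
  have c_minus_1: "c - 1 = real k / (\<alpha> - 1)"
    using \<alpha>_gt by (simp add: c_def field_simps)
  have lyapunov: "2 * s * c\<^sup>2 * gap (k + 1) + (norm (z (k + 1) - xstar))\<^sup>2
      \<le> 2 * s * c * (c - 1) * gap k + (norm (z k - xstar))\<^sup>2"
    unfolding c_def by (rule iterate_lyapunov_step[OF k finite])
  define A where "A = 2 * s / (\<alpha> - 1)"
  have coeff_next: "(\<alpha> - 1) * (2 * s * c\<^sup>2) = A * (real (k + 1) + \<alpha> - 2)\<^sup>2"
  proof -
    have "r * (2 * s * (q / r)\<^sup>2) = 2 * s / r * q\<^sup>2" if "0 < r" for r q :: real
      using that by (simp add: power_divide power2_eq_square)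
    then show ?thesis using \<alpha>_gt by (simp add: A_def c_def add.commute)
  qed
  have coeff: "(\<alpha> - 1) * (2 * s * c * (c - 1)) = A * ((real k + \<alpha> - 1) * real k)"
  proof -
    have "r * (2 * s * (q / r) * (k / r)) = 2 * s / r * (q * k)" if "0 < r" for r q k :: real
      using that by (simp add: power2_eq_square)
    then show ?thesis using \<alpha>_gt unfolding c_minus_1 by (simp add: A_def c_def)
  qed
  have "(\<alpha> - 1) * (2 * s * c\<^sup>2 * gap (k + 1) + (norm (z (k + 1) - xstar))\<^sup>2)
      \<le> (\<alpha> - 1) * (2 * s * c * (c - 1) * gap k + (norm (z k - xstar))\<^sup>2)"
    using lyapunov \<alpha>_gt by (intro mult_left_mono) auto
  then have "(\<alpha> - 1) * (2 * s * c\<^sup>2) * gap (k + 1) + (\<alpha> - 1) * (norm (z (k + 1) - xstar))\<^sup>2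
      \<le> (\<alpha> - 1) * (2 * s * c * (c - 1)) * gap k + (\<alpha> - 1) * (norm (z k - xstar))\<^sup>2"
    by (simp only: distrib_left mult.assoc)
  then have "A * (real (k + 1) + \<alpha> - 2)\<^sup>2 * gap (k + 1) + (\<alpha> - 1) * (norm (z (k + 1) - xstar))\<^sup>2
      \<le> A * ((real k + \<alpha> - 1) * real k) * gap k + (\<alpha> - 1) * (norm (z k - xstar))\<^sup>2"
    unfolding coeff_next coeff .
  moreover have "A * ((real k + \<alpha> - 1) * real k) * gap k
      = A * (real k + \<alpha> - 2)\<^sup>2 * gap k - A * ((\<alpha> - 3) * real k) * gap k - A * (\<alpha> - 2)\<^sup>2 * gap k"
    by (simp add: power2_eq_square algebra_simps)
  moreover have "2 * s * (\<alpha> - 3) / (\<alpha> - 1) * (real k * gap k) = A * ((\<alpha> - 3) * real k) * gap k"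
    by (simp add: A_def)
  moreover have "0 \<le> A * (\<alpha> - 2)\<^sup>2 * gap k"
    using \<alpha>_gt s_pos gap_nonneg[OF finite] by (simp add: A_def)
  ultimately show ?thesis
    unfolding energy_def A_def[symmetric] by linarith
qed

theorem weighted_gap_sum_le:
  assumes "\<Psi> (x 1) \<noteq> \<infinity>"
  shows "(\<Sum>k. ereal (real (k + 1) * gap (k + 1))) \<le> ereal ((\<alpha> - 1) / (2 * s * (\<alpha> - 3)) * energy 1)"
proof -
  define C where "C = 2 * s * (\<alpha> - 3) / (\<alpha> - 1)"
  have "(\<Sum>k. ereal (real (k + 1) * gap (k + 1))) \<le> ereal (energy (0 + 1) / C)"
  proof (rule suminf_ereal_le_of_energy_decrease)
    show "0 < C" using \<alpha>_gt s_pos by (simp add: C_def)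
    fix k
    have finite: "\<Psi> (x (k + 1)) \<noteq> \<infinity>" by (rule iterate_finite[OF assms]) simp
    show "0 \<le> real (k + 1) * gap (k + 1)" "0 \<le> energy (k + 1)"
      using gap_nonneg[OF finite] energy_nonneg[OF finite] by simp_all
    show "energy (Suc k + 1) + C * (real (k + 1) * gap (k + 1)) \<le> energy (k + 1)"
      using energy_decrease[OF _ finite] by (simp add: C_def)
  qed
  then show ?thesis by (simp add: C_def mult.commute)
qed

end

theorem fact3:
  fixes \<Psi> :: "'a::{real_inner, complete_space} \<Rightarrow> ereal"
    and \<Phi> :: "'a \<Rightarrow> real"
    and g\<Phi> :: "'a \<Rightarrow> 'a"
    and L s \<alpha> :: real
    and x y :: "nat \<Rightarrow> 'a"
    and xstar :: 'a
  assumes \<Psi>_proper: "proper_fun \<Psi>"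
    and \<Psi>_lsc: "lsc_fun \<Psi>"
    and \<Psi>_convex: "convex_ereal_fun \<Psi>"
    and \<Phi>_convex: "convex_on UNIV \<Phi>"
    and \<Phi>_grad: "\<And>u. (\<Phi> has_derivative (\<lambda>h. g\<Phi> u \<bullet> h)) (at u)"
    and grad_cont: "continuous_on UNIV g\<Phi>"
    and L_pos: "L > 0"
    and grad_lip: "\<And>u v. norm (g\<Phi> u - g\<Phi> v) \<le> L * norm (u - v)"
    and argmin_ne: "argmin_set (\<lambda>u. \<Psi> u + ereal (\<Phi> u)) \<noteq> {}"
    and \<alpha>_gt: "\<alpha> > 3"
    and s_pos: "0 < s" and s_lt: "s < 1 / L"
    and y_def: "\<And>k. k \<ge> 1 \<Longrightarrow>
       y k = x k + ((real k - 1) / (real k + \<alpha> - 1)) *\<^sub>R (x k - x (k - 1))"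
    and x_step: "\<And>k. k \<ge> 1 \<Longrightarrow>
       x (k + 1) \<in> prox_set s \<Psi> (y k - s *\<^sub>R g\<Phi> (y k))"
    and xstar_min: "xstar \<in> argmin_set (\<lambda>u. \<Psi> u + ereal (\<Phi> u))"
  shows
    "let \<Theta> = (\<lambda>u. \<Psi> u + ereal (\<Phi> u));
         z = (\<lambda>k. x k + ((real k - 1) / (\<alpha> - 1)) *\<^sub>R (x k - x (k - 1)));
         \<E> = (\<lambda>k. ereal (2 * s / (\<alpha> - 1) * (real k + \<alpha> - 2)\<^sup>2) * (\<Theta> (x k) - \<Theta> xstar)
                  + ereal ((\<alpha> - 1) * (norm (z k - xstar))\<^sup>2))
     in (\<Sum>k. ereal (real (k + 1)) * (\<Theta> (x (k + 1)) - \<Theta> xstar))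
          \<le> ereal ((\<alpha> - 1) / (2 * s * (\<alpha> - 3))) * \<E> 1"
proof -
  txt \<open>Lower semicontinuity, continuity of the gradient, completeness and \<open>argmin \<Theta> \<noteq> {}\<close>
    only guarantee that the iteration is well defined, which \<open>x_step\<close> already asserts.\<close>
  have "s * L \<le> 1" using s_lt L_pos by (simp add: field_simps)
  then interpret inertial_forward_backward \<Psi> \<Phi> g\<Phi> L s \<alpha> x y xstar
    using assms by unfold_locales auto
  show ?thesis
  proof (cases "\<Psi> (x 1) = \<infinity>")
    case True
    txt \<open>Then \<open>\<E> 1 = \<infinity>\<close>.\<close>
    then have "(\<Psi> (x 1) + ereal (\<Phi> (x 1))) - (\<Psi> xstar + ereal (\<Phi> xstar)) = \<infinity>"
      using xstar_finite not_minus_infinity[of xstar] by (cases "\<Psi> xstar") auto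
    then show ?thesis using \<alpha>_gt s_pos by (simp add: Let_def)
  next
    case False
    have "ereal (real (k + 1)) * ((\<Psi> (x (k + 1)) + ereal (\<Phi> (x (k + 1)))) - (\<Psi> xstar + ereal (\<Phi> xstar)))
        = ereal (real (k + 1) * gap (k + 1))" for k
      using objective_gap_eq[OF iterate_finite[OF False]] by simp
    then show ?thesis
      using weighted_gap_sum_le[OF False] energy_ereal_eq[OF False] by (simp add: Let_def z_def)
  qed
qed

end
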